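(* Let $m\ge1$ and $n\ge0$. Then $$\sum_{w\in W_0}w\left(\frac{\prod_{i=1}^m\prod_{j=1}^n(1-x_i^{-1}y_j^{-1})\;x_1^{m-1}x_2^{m-2}\cdots x_m^{0}\;y_1^{n}y_2^{n-1}\cdots y_n^{1}}{\Delta(u)\Delta(v)\prod_{j=1}^n(y_j-y_j^{-1})}\right)=2^{\min(m-1,n)}.$$
   Context: Set $u_i=x_i+x_i^{-1}$ and $v_j=y_j+y_j^{-1}$, with $\Delta(u)=\prod_{i<j}(u_i-u_j)$ and $\Delta(v)=\prod_{i<j}(v_i-v_j)$. $W_0=(S_m\ltimes\mathbb Z_2^{m-1})\times(S_n\ltimes\mathbb Z_2^n)$ is the Weyl group of type $D_m\times C_n$. It acts by permuting $x_1,\dots,x_m$ and permuting $y_1,\dots,y_n$. It also inverts any even number of the $x_i$ (i.e. $x_i\mapsto x_i^{-1}$) and any subset of the $y_j$. The left-hand side is the Euler supercharacter of the trivial representation of the parabolic subalgebra of $\mathfrak{osp}(2m,2n)$ with Levi part $\mathfrak{gl}(m,n)$. *)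

theory Defs
  imports Complex_Main "HOL-Combinatorics.Permutations"
begin

text \<open>Variables x_1..x_m and y_1..y_n are functions nat => complex, indices 1..m, 1..n.\<close>

definition uvar :: "complex \<Rightarrow> complex" where
  "uvar z = z + inverse z"

definition vandermonde :: "nat \<Rightarrow> (nat \<Rightarrow> complex) \<Rightarrow> complex" where
  "vandermonde k u = (\<Prod>i\<in>{1..k}. \<Prod>j\<in>{i<..k}. (u i - u j))"

definition summand :: "nat \<Rightarrow> nat \<Rightarrow> (nat \<Rightarrow> complex) \<Rightarrow> (nat \<Rightarrow> complex) \<Rightarrow> complex" where
  "summand m n x y =
     ((\<Prod>i\<in>{1..m}. \<Prod>j\<in>{1..n}. (1 - inverse (x i) * inverse (y j)))
      * (\<Prod>i\<in>{1..m}. x i ^ (m - i)) * (\<Prod>j\<in>{1..n}. y j ^ (n + 1 - j)))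
     / (vandermonde m (\<lambda>i. uvar (x i)) * vandermonde n (\<lambda>j. uvar (y j))
        * (\<Prod>j\<in>{1..n}. (y j - inverse (y j))))"

text \<open>Action of the Weyl group element (sigma, S, tau, T) of type D_m x C_n on the variables:
  x_i |-> x_(sigma i) or its inverse (if i in S, |S| even), similarly for y (T arbitrary).\<close>
definition weyl_act :: "(nat \<Rightarrow> nat) \<Rightarrow> nat set \<Rightarrow> (nat \<Rightarrow> complex) \<Rightarrow> nat \<Rightarrow> complex" where
  "weyl_act \<sigma> S x = (\<lambda>i. if i \<in> S then inverse (x (\<sigma> i)) else x (\<sigma> i))"

end

theory Submission
  imports Defs "HOL-Computational_Algebra.Polynomial"
begin

(* With a_i = 1/x_i and b_j = 1/y_j every summand factors as
     kernel(a,b) * gl_factor(x) * gl_factor(y)                        (summand_factor)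
   where gl_factor is the GL part of the Weyl denominator and
     kernel(a,b) = prod (1 - a_i b_j) / (prod_{i<j} (1 - a_i a_j) * prod_{i<=j} (1 - b_i b_j))
   is symmetric in the a's and in the b's.  A Weyl group element acts by a permutation
   composed with inversions of a set of variables; reindexing (sum_weyl_regroup) lets the
   permutations act on the GL factors only, and these sum to 1 (gl_sum_one, a Lagrange
   interpolation identity).  What remains is the sum over even R and arbitrary T of the
   kernel with the variables in R and T inverted (kernel_double_sum).  Two kernel
   identities, each proved by induction on the number of variables and interpolation in
   one variable, show that the inner sum over T is 1 if m <= n + 1 (kernel_sum_C) and the
   inner sum over R is 1 if n + 1 <= m (kernel_sum_D); counting subsets gives 2^min(m-1,n). *)

definition pair_prod :: "(nat \<Rightarrow> nat \<Rightarrow> 'a::comm_monoid_mult) \<Rightarrow> nat set \<Rightarrow> 'a" where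
  "pair_prod g A = (\<Prod>i\<in>A. \<Prod>j\<in>{j\<in>A. i<j}. g i j)"

lemma pair_prod_remove:
  assumes fin: "finite A" and k: "k \<in> A" and sym: "\<And>i j. g i j = g j i"
  shows "pair_prod g A = pair_prod g (A - {k}) * (\<Prod>j\<in>A-{k}. g k j)"
proof -
  have below: "{j\<in>A. i<j} = {j\<in>A-{k}. i<j} \<union> (if i < k then {k} else {})" if "i \<noteq> k" for i
    using that k by auto
  have "pair_prod g A = (\<Prod>j\<in>{j\<in>A. k<j}. g k j) * (\<Prod>i\<in>A-{k}. \<Prod>j\<in>{j\<in>A. i<j}. g i j)"
    unfolding pair_prod_def using prod.remove[OF fin k] by simp
  also have "(\<Prod>i\<in>A-{k}. \<Prod>j\<in>{j\<in>A. i<j}. g i j) =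
      (\<Prod>i\<in>A-{k}. (\<Prod>j\<in>{j\<in>A-{k}. i<j}. g i j) * (if i < k then g k i else 1))"
    using fin by (intro prod.cong refl) (auto simp: below prod.union_disjoint sym[of _ k])
  also have "\<dots> = pair_prod g (A - {k}) * (\<Prod>i\<in>A-{k}. if i < k then g k i else 1)"
    unfolding pair_prod_def by (rule prod.distrib)
  also have "(\<Prod>i\<in>A-{k}. if i < k then g k i else 1) = (\<Prod>i\<in>{i\<in>A-{k}. i<k}. g k i)"
    using fin by (intro prod.inter_filter[symmetric]) simp
  finally have "pair_prod g A = pair_prod g (A - {k}) *
      ((\<Prod>j\<in>{j\<in>A. k<j}. g k j) * (\<Prod>i\<in>{i\<in>A-{k}. i<k}. g k i))"
    by (simp add: algebra_simps)
  also have "(\<Prod>j\<in>{j\<in>A. k<j}. g k j) * (\<Prod>i\<in>{i\<in>A-{k}. i<k}. g k i) = (\<Prod>j\<in>A-{k}. g k j)"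
  proof -
    have "A - {k} = {j\<in>A. k<j} \<union> {i\<in>A-{k}. i<k}" by auto
    then show ?thesis
      using fin by (metis (no_types, lifting) prod.union_disjoint finite_Diff finite_subset
          mem_Collect_eq disjoint_iff less_asym subsetI Diff_subset)
  qed
  finally show ?thesis .
qed

text \<open>For the largest index no symmetry is needed.\<close>

lemma pair_prod_remove_max:
  assumes fA: "finite A" and M: "M \<in> A" and mx: "\<And>i. i \<in> A \<Longrightarrow> i \<le> M"
  shows "pair_prod g A = pair_prod g (A - {M}) * (\<Prod>i\<in>A-{M}. g i M)"
proof -
  have "pair_prod g A = (\<Prod>j\<in>{j\<in>A. M<j}. g M j) * (\<Prod>i\<in>A-{M}. \<Prod>j\<in>{j\<in>A. i<j}. g i j)"
    unfolding pair_prod_def using prod.remove[OF fA M] by simp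
  also have "{j\<in>A. M<j} = {}" using mx by force
  also have "(\<Prod>i\<in>A-{M}. \<Prod>j\<in>{j\<in>A. i<j}. g i j)
      = (\<Prod>i\<in>A-{M}. g i M * (\<Prod>j\<in>{j\<in>A-{M}. i<j}. g i j))"
  proof (intro prod.cong refl)
    fix i assume "i \<in> A - {M}"
    then have "{j\<in>A. i<j} = insert M {j\<in>A-{M}. i<j}" using M mx by force
    then show "(\<Prod>j\<in>{j\<in>A. i<j}. g i j) = g i M * (\<Prod>j\<in>{j\<in>A-{M}. i<j}. g i j)"
      using fA by simp
  qed
  finally show ?thesis unfolding pair_prod_def by (simp add: prod.distrib mult.commute)
qed

lemma pair_prod_bij:
  assumes "finite A" "bij_betw \<sigma> A A'" "\<And>i j. g i j = g j i"
  shows "pair_prod (\<lambda>i j. g (\<sigma> i) (\<sigma> j)) A = pair_prod g A'"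
  using assms(1,2)
proof (induction A arbitrary: A' rule: finite_induct)
  case empty
  then show ?case by (simp add: pair_prod_def bij_betw_def)
next
  case (insert k F)
  have A': "A' = insert (\<sigma> k) (\<sigma> ` F)" "\<sigma> k \<notin> \<sigma> ` F"
    using insert.prems insert.hyps by (auto simp: bij_betw_def)
  have bF: "bij_betw \<sigma> F (A' - {\<sigma> k})"
    using insert.prems insert.hyps A' by (auto simp: bij_betw_def inj_on_def)
  have "pair_prod (\<lambda>i j. g (\<sigma> i) (\<sigma> j)) (insert k F)
      = pair_prod (\<lambda>i j. g (\<sigma> i) (\<sigma> j)) F * (\<Prod>j\<in>F. g (\<sigma> k) (\<sigma> j))"
    using pair_prod_remove[of "insert k F" k "\<lambda>i j. g (\<sigma> i) (\<sigma> j)"] insert.hyps assms(3) by auto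
  also have "\<dots> = pair_prod g (A' - {\<sigma> k}) * (\<Prod>j\<in>A' - {\<sigma> k}. g (\<sigma> k) j)"
    using insert.IH[OF bF] prod.reindex_bij_betw[OF bF, of "g (\<sigma> k)"] by simp
  also have "\<dots> = pair_prod g A'"
    using pair_prod_remove[of A' "\<sigma> k" g] A' insert.hyps assms(3) by simp
  finally show ?case .
qed

lemma pair_prod_extend_trivial:
  assumes "finite A" "finite F" "A \<inter> F = {}" "\<And>i j. g i j = g j i"
    "\<And>i j. i \<in> F \<Longrightarrow> g i j = 1"
  shows "pair_prod g (A \<union> F) = pair_prod g A"
  using assms(2,3,5)
proof (induction F rule: finite_induct)
  case empty then show ?case by simp
next
  case (insert f F)
  have "pair_prod g (A \<union> insert f F) = pair_prod g (A \<union> F) * (\<Prod>j\<in>(A \<union> insert f F) - {f}. g f j)"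
    using pair_prod_remove[of "A \<union> insert f F" f g] assms insert.hyps insert.prems
    by (simp add: insert_Diff_if Un_Diff)
  then show ?case using insert by simp
qed

lemma pair_prod_le_one: "finite A \<Longrightarrow> card A \<le> 1 \<Longrightarrow> pair_prod g A = 1"
  by (auto simp: pair_prod_def card_le_Suc0_iff_eq intro!: prod.neutral)

text \<open>Inverting the variables indexed by a set \<open>R\<close>; this is how the sign changes of the
  Weyl groups of types C and D act.\<close>

definition flip_on :: "nat set \<Rightarrow> (nat \<Rightarrow> 'a::field) \<Rightarrow> nat \<Rightarrow> 'a" where
  "flip_on R z = (\<lambda>k. if k \<in> R then inverse (z k) else z k)"

definition toggle :: "nat \<Rightarrow> nat set \<Rightarrow> nat set" where
  "toggle l S = (if l \<in> S then S - {l} else insert l S)"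

lemma flip_on_toggle: "flip_on S z = flip_on (toggle l S) (flip_on {l} z)"
  by (auto simp: flip_on_def toggle_def fun_eq_iff)

lemma toggle_bij_Pow:
  assumes "l \<in> A"
  shows "bij_betw (toggle l) (Pow A) (Pow A)"
  by (rule bij_betw_byWitness[where f' = "toggle l"]) (use assms in \<open>auto simp: toggle_def\<close>)

lemma toggle_bij_parity:
  assumes "finite A" "l \<in> A"
  shows "bij_betw (toggle l) {S. S \<subseteq> A \<and> even (card S) = p} {S. S \<subseteq> A \<and> even (card S) = (\<not> p)}"
proof -
  have parity: "even (card (toggle l S)) \<longleftrightarrow> odd (card S)" if "S \<subseteq> A" for S
  proof -
    have fin: "finite S" using that assms(1) finite_subset by blast
    show ?thesis
    proof (cases "l \<in> S")
      case True
      then have "card S = Suc (card (S - {l}))" using fin by (metis card_Suc_Diff1)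
      then show ?thesis using True by (simp add: toggle_def)
    qed (use fin in \<open>simp add: toggle_def\<close>)
  qed
  have inv: "toggle l (toggle l S) = S" for S by (auto simp: toggle_def)
  have sub: "S \<subseteq> A \<Longrightarrow> toggle l S \<subseteq> A" for S using assms(2) by (auto simp: toggle_def)
  show ?thesis
  proof (rule bij_betw_byWitness[where f' = "toggle l"])
    show "toggle l ` {S. S \<subseteq> A \<and> even (card S) = p} \<subseteq> {S. S \<subseteq> A \<and> even (card S) = (\<not> p)}"
      "toggle l ` {S. S \<subseteq> A \<and> even (card S) = (\<not> p)} \<subseteq> {S. S \<subseteq> A \<and> even (card S) = p}"
      using sub parity by auto
  qed (simp_all add: inv)
qed

lemma sum_flip_toggle:
  assumes "bij_betw (toggle l) \<S> \<T>"
  shows "(\<Sum>S\<in>\<S>. F (flip_on S z)) = (\<Sum>S\<in>\<T>. F (flip_on S (flip_on {l} z)))"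
  using sum.reindex_bij_betw[OF assms, of "\<lambda>S. F (flip_on S (flip_on {l} z))"]
  by (simp flip: flip_on_toggle)

definition generic_D :: "nat set \<Rightarrow> (nat \<Rightarrow> 'a::field) \<Rightarrow> bool" where
  "generic_D A a \<longleftrightarrow> (\<forall>i\<in>A. a i \<noteq> 0) \<and> (\<forall>i\<in>A. \<forall>j\<in>A. i \<noteq> j \<longrightarrow> a i \<noteq> a j \<and> a i * a j \<noteq> 1)"

definition generic_C :: "nat set \<Rightarrow> (nat \<Rightarrow> 'a::field) \<Rightarrow> bool" where
  "generic_C B b \<longleftrightarrow> generic_D B b \<and> (\<forall>j\<in>B. b j * b j \<noteq> 1)"

lemma generic_D_subset: "generic_D A a \<Longrightarrow> A' \<subseteq> A \<Longrightarrow> generic_D A' a"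
  unfolding generic_D_def by blast

lemma generic_C_subset: "generic_C B b \<Longrightarrow> B' \<subseteq> B \<Longrightarrow> generic_C B' b"
  unfolding generic_C_def using generic_D_subset by blast

lemma generic_D_flip:
  assumes "generic_D A a"
  shows "generic_D A (flip_on R a)"
  unfolding generic_D_def
proof (intro conjI ballI impI)
  fix i assume "i \<in> A"
  then show "flip_on R a i \<noteq> 0" using assms by (auto simp: generic_D_def flip_on_def)
next
  fix i j assume ij: "i \<in> A" "j \<in> A" "i \<noteq> j"
  have h: "a i \<noteq> 0" "a j \<noteq> 0" "a i \<noteq> a j" "a i * a j \<noteq> 1"
    using assms ij unfolding generic_D_def by auto
  show "flip_on R a i \<noteq> flip_on R a j" "flip_on R a i * flip_on R a j \<noteq> 1"
    using h by (auto simp: flip_on_def field_simps)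
qed

lemma generic_C_flip:
  assumes "generic_C B b"
  shows "generic_C B (flip_on T b)"
  using assms generic_D_flip
  by (auto simp: generic_C_def generic_D_def flip_on_def field_simps)

lemma generic_C_products: "generic_C B b \<Longrightarrow> i \<in> B \<Longrightarrow> j \<in> B \<Longrightarrow> b i * b j \<noteq> 1"
  unfolding generic_C_def generic_D_def by (cases "i = j") auto

definition cross_prod :: "nat set \<Rightarrow> nat set \<Rightarrow> (nat \<Rightarrow> 'a::field) \<Rightarrow> (nat \<Rightarrow> 'a) \<Rightarrow> 'a" where
  "cross_prod A B a b = (\<Prod>i\<in>A. \<Prod>j\<in>B. 1 - a i * b j)"

definition den_D :: "nat set \<Rightarrow> (nat \<Rightarrow> 'a::field) \<Rightarrow> 'a" where
  "den_D A a = pair_prod (\<lambda>i j. 1 - a i * a j) A"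

definition den_C :: "nat set \<Rightarrow> (nat \<Rightarrow> 'a::field) \<Rightarrow> 'a" where
  "den_C B b = pair_prod (\<lambda>i j. 1 - b i * b j) B * (\<Prod>j\<in>B. 1 - b j * b j)"

definition kernel :: "nat set \<Rightarrow> nat set \<Rightarrow> (nat \<Rightarrow> 'a::field) \<Rightarrow> (nat \<Rightarrow> 'a) \<Rightarrow> 'a" where
  "kernel A B a b = cross_prod A B a b / (den_D A a * den_C B b)"

lemma kernel_cong:
  "(\<And>i. i \<in> A \<Longrightarrow> a i = a' i) \<Longrightarrow> (\<And>j. j \<in> B \<Longrightarrow> b j = b' j) \<Longrightarrow>
    kernel A B a b = kernel A B a' b'"
  unfolding kernel_def cross_prod_def den_D_def den_C_def pair_prod_def
  by (intro arg_cong2[where f="(/)"] arg_cong2[where f="(*)"] prod.cong refl) auto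

lemma divide_cancel_factor:
  fixes x y d P :: "'a::field"
  assumes "P \<noteq> 0"
  shows "(x * y) / (d * P) * P = x / d * y"
  using assms by (cases "d = 0") (simp_all add: field_simps)

lemma kernel_remove_A:
  assumes "finite A" "k \<in> A" and nz: "(\<Prod>i\<in>A-{k}. 1 - a k * a i) \<noteq> 0"
  shows "kernel A B a b * (\<Prod>i\<in>A-{k}. 1 - a k * a i) = kernel (A - {k}) B a b * (\<Prod>j\<in>B. 1 - a k * b j)"
proof -
  have "cross_prod A B a b = cross_prod (A - {k}) B a b * (\<Prod>j\<in>B. 1 - a k * b j)"
    unfolding cross_prod_def using assms by (subst prod.remove) (auto simp: mult.commute)
  moreover have "den_D A a = den_D (A - {k}) a * (\<Prod>i\<in>A-{k}. 1 - a k * a i)"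
    unfolding den_D_def using assms by (intro pair_prod_remove) (auto simp: mult.commute)
  ultimately show ?thesis
    unfolding kernel_def using divide_cancel_factor[OF nz] by (simp add: mult_ac)
qed

lemma kernel_remove_B:
  assumes "finite B" "k \<in> B" and nz: "(\<Prod>j\<in>B-{k}. 1 - b k * b j) * (1 - b k * b k) \<noteq> 0"
  shows "kernel A B a b * ((\<Prod>j\<in>B-{k}. 1 - b k * b j) * (1 - b k * b k))
    = kernel A (B - {k}) a b * (\<Prod>i\<in>A. 1 - a i * b k)"
proof -
  have "cross_prod A B a b = cross_prod A (B - {k}) a b * (\<Prod>i\<in>A. 1 - a i * b k)"
    unfolding cross_prod_def using assms by (subst prod.remove) (auto simp: prod.distrib)
  moreover have "den_C B b = den_C (B - {k}) b * ((\<Prod>j\<in>B-{k}. 1 - b k * b j) * (1 - b k * b k))"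
    unfolding den_C_def using assms
    by (subst pair_prod_remove[of B k]) (auto simp: mult.commute prod.remove mult_ac)
  ultimately have "kernel A B a b * ((\<Prod>j\<in>B-{k}. 1 - b k * b j) * (1 - b k * b k))
      = (cross_prod A (B - {k}) a b * (\<Prod>i\<in>A. 1 - a i * b k))
        / ((den_D A a * den_C (B - {k}) b) * ((\<Prod>j\<in>B-{k}. 1 - b k * b j) * (1 - b k * b k)))
        * ((\<Prod>j\<in>B-{k}. 1 - b k * b j) * (1 - b k * b k))"
    by (simp add: kernel_def mult_ac)
  then show ?thesis
    unfolding divide_cancel_factor[OF nz] kernel_def .
qed

text \<open>The kernel multiplied by the linear factors that vanish when a variable is specialised
  to the inverse of one of its own arguments.\<close>

lemma kernel_eval_A:
  assumes "finite A" "k \<in> A" "generic_D A c"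
  shows "kernel A B c b * (\<Prod>i\<in>A. 1 - c i * c k)
    = kernel (A - {k}) B c b * ((1 - c k * c k) * (\<Prod>j\<in>B. 1 - c k * b j))"
proof -
  have nz: "(\<Prod>i\<in>A-{k}. 1 - c k * c i) \<noteq> 0"
    using assms by (auto simp: generic_D_def prod_zero_iff)
  have "(\<Prod>i\<in>A. 1 - c i * c k) = (1 - c k * c k) * (\<Prod>i\<in>A-{k}. 1 - c k * c i)"
    using assms by (subst prod.remove[of A k]) (auto simp: mult.commute)
  then show ?thesis
    using kernel_remove_A[OF assms(1,2) nz, of B b] by (simp add: mult_ac)
qed

lemma kernel_eval_B:
  assumes "finite B" "k \<in> B" "generic_C B c"
  shows "kernel A B a c * (\<Prod>j\<in>B. 1 - c j * c k) = kernel A (B - {k}) a c * (\<Prod>i\<in>A. 1 - a i * c k)"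
proof -
  have nz: "(\<Prod>j\<in>B-{k}. 1 - c k * c j) * (1 - c k * c k) \<noteq> 0"
    using assms generic_C_products[OF assms(3)] by (auto simp: prod_zero_iff)
  have "(\<Prod>j\<in>B. 1 - c j * c k) = (\<Prod>j\<in>B-{k}. 1 - c k * c j) * (1 - c k * c k)"
    using assms by (subst prod.remove[of B k]) (auto simp: mult.commute)
  then show ?thesis
    using kernel_remove_B[OF assms(1,2) nz] by simp
qed

lemma kernel_permute_A:
  assumes "\<sigma> permutes A" "finite A"
  shows "kernel A B (\<lambda>i. a (\<sigma> i)) b = kernel A B a b"
proof -
  have "cross_prod A B (\<lambda>i. a (\<sigma> i)) b = cross_prod A B a b"
    unfolding cross_prod_def using prod.permute[OF assms(1), of "\<lambda>i. \<Prod>j\<in>B. 1 - a i * b j"]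
    by (simp add: o_def)
  moreover have "den_D A (\<lambda>i. a (\<sigma> i)) = den_D A a"
    unfolding den_D_def
    using pair_prod_bij[OF assms(2) permutes_imp_bij[OF assms(1)], of "\<lambda>i j. 1 - a i * a j"]
    by (simp add: mult.commute)
  ultimately show ?thesis by (simp add: kernel_def)
qed

lemma kernel_permute_B:
  assumes "\<sigma> permutes B" "finite B"
  shows "kernel A B a (\<lambda>j. b (\<sigma> j)) = kernel A B a b"
proof -
  have "cross_prod A B a (\<lambda>j. b (\<sigma> j)) = cross_prod A B a b"
    unfolding cross_prod_def
  proof (rule prod.cong[OF refl])
    fix i show "(\<Prod>j\<in>B. 1 - a i * b (\<sigma> j)) = (\<Prod>j\<in>B. 1 - a i * b j)"
      using prod.permute[OF assms(1), of "\<lambda>j. 1 - a i * b j"] by (simp add: o_def)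
  qed
  moreover have "pair_prod (\<lambda>i j. 1 - b (\<sigma> i) * b (\<sigma> j)) B = pair_prod (\<lambda>i j. 1 - b i * b j) B"
    using pair_prod_bij[OF assms(2) permutes_imp_bij[OF assms(1)], of "\<lambda>i j. 1 - b i * b j"]
    by (simp add: mult.commute)
  moreover have "(\<Prod>j\<in>B. 1 - b (\<sigma> j) * b (\<sigma> j)) = (\<Prod>j\<in>B. 1 - b j * b j)"
    using prod.permute[OF assms(1), of "\<lambda>j. 1 - b j * b j"] by (simp add: o_def)
  ultimately show ?thesis by (simp add: kernel_def den_C_def)
qed

lemma kernel_pad_zero:
  assumes "finite B" "finite F" "B \<inter> F = {}" "\<And>j. j \<in> F \<Longrightarrow> b j = 0"
  shows "kernel A (B \<union> F) a b = kernel A B a b"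
proof -
  have "cross_prod A (B \<union> F) a b = cross_prod A B a b"
    unfolding cross_prod_def using assms by (simp add: prod.union_disjoint)
  moreover have "pair_prod (\<lambda>i j. 1 - b i * b j) (B \<union> F) = pair_prod (\<lambda>i j. 1 - b i * b j) B"
    by (rule pair_prod_extend_trivial) (use assms in \<open>auto simp: mult.commute\<close>)
  moreover have "(\<Prod>j\<in>B \<union> F. 1 - b j * b j) = (\<Prod>j\<in>B. 1 - b j * b j)"
    using assms by (simp add: prod.union_disjoint)
  ultimately show ?thesis by (simp add: kernel_def den_C_def)
qed

text \<open>Polynomials with prescribed reciprocal roots, used to turn the evaluation identities
  into identities of polynomials.\<close>

definition lin_prod :: "nat set \<Rightarrow> (nat \<Rightarrow> 'a::field) \<Rightarrow> 'a poly" where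
  "lin_prod A a = (\<Prod>i\<in>A. [:1, - a i:])"

lemma poly_lin_prod: "poly (lin_prod A a) w = (\<Prod>i\<in>A. 1 - a i * w)"
  unfolding lin_prod_def poly_prod by (intro prod.cong) (simp_all add: algebra_simps)

lemma degree_lin_prod: "finite A \<Longrightarrow> degree (lin_prod A a) \<le> card A"
proof -
  assume fA: "finite A"
  have "degree (lin_prod A a) \<le> (\<Sum>i\<in>A. degree [:1, - a i:])"
    unfolding lin_prod_def using degree_prod_sum_le[OF fA, of "\<lambda>i. [:1, - a i:]"] by (simp add: o_def)
  also have "\<dots> \<le> (\<Sum>i\<in>A. 1)" by (intro sum_mono) simp
  finally show ?thesis by simp
qed

lemma degree_sum_smult_le:
  "finite X \<Longrightarrow> (\<And>x. x \<in> X \<Longrightarrow> degree (p x) \<le> d) \<Longrightarrow> degree (\<Sum>x\<in>X. smult (k x) (p x)) \<le> d"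
  by (rule degree_sum_le) (auto intro: order_trans[OF degree_smult_le])

text \<open>The interpolation points: the variables and their inverses.  For generic variables
  almost all of these are distinct.\<close>

definition points :: "nat set \<Rightarrow> (nat \<Rightarrow> 'a::field) \<Rightarrow> 'a set" where
  "points A a = a ` A \<union> (\<lambda>i. inverse (a i)) ` A"

lemma card_points_lower:
  assumes fA: "finite A" and ga: "generic_D A a"
  shows "card A + card {k\<in>A. a k * a k \<noteq> 1} \<le> card (points A a)"
proof -
  define G where "G = {k\<in>A. a k * a k \<noteq> 1}"
  have inj1: "inj_on a A" using ga unfolding generic_D_def inj_on_def by blast
  have inj2: "inj_on (\<lambda>i. inverse (a i)) G" using inj1 unfolding inj_on_def G_def by auto
  have disj: "a ` A \<inter> (\<lambda>i. inverse (a i)) ` G = {}"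
  proof (rule ccontr)
    assume "a ` A \<inter> (\<lambda>i. inverse (a i)) ` G \<noteq> {}"
    then obtain i j where ij: "i \<in> A" "j \<in> G" "a i = inverse (a j)" by auto
    then have "a i * a j = 1" using ga by (auto simp: generic_D_def G_def)
    then show False using ga ij(1,2) by (cases "i = j") (auto simp: generic_D_def G_def)
  qed
  have "card A + card G = card (a ` A \<union> (\<lambda>i. inverse (a i)) ` G)"
    using card_Un_disjoint[OF _ _ disj] card_image[OF inj1] card_image[OF inj2] fA
    by (simp add: G_def)
  also have "\<dots> \<le> card (points A a)"
    unfolding points_def by (rule card_mono) (use fA G_def in auto)
  finally show ?thesis unfolding G_def .
qed

lemma card_points_C:
  assumes "finite B" "generic_C B b"
  shows "2 * card B \<le> card (points B b)"
proof -
  have "{k\<in>B. b k * b k \<noteq> 1} = B" using assms(2) by (auto simp: generic_C_def)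
  then show ?thesis using card_points_lower[of B b] assms by (simp add: generic_C_def)
qed

text \<open>At most two generic variables are square roots of unity, so at most two points coincide.\<close>

lemma card_points_D:
  assumes fA: "finite A" and ga: "generic_D A a"
  shows "2 * card A \<le> card (points A a) + 2"
proof -
  define U where "U = {k\<in>A. a k * a k = 1}"
  have "card U \<le> card {1, -1 :: 'a}"
  proof (rule card_inj_on_le)
    show "inj_on a U" using ga unfolding generic_D_def inj_on_def U_def by blast
    show "a ` U \<subseteq> {1, -1}"
    proof
      fix z assume "z \<in> a ` U"
      then have "(z - 1) * (z + 1) = 0" by (auto simp: U_def algebra_simps)
      then show "z \<in> {1, -1}" by (auto simp: eq_neg_iff_add_eq_0)
    qed
  qed simp
  also have "card {1, -1 :: 'a} \<le> 2" by (intro card_insert_le_m1) simp_all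
  finally have "card U \<le> 2" .
  moreover have "card A = card {k\<in>A. a k * a k \<noteq> 1} + card U"
    unfolding U_def using fA by (subst card_Un_disjoint[symmetric]) (auto intro: arg_cong[where f=card])
  ultimately show ?thesis using card_points_lower[OF fA ga] by linarith
qed

text \<open>The proof is
  by induction on \<open>|B|\<close>: removing one type D variable \<open>a\<^sub>m\<close>, the sum becomes a polynomial in
  \<open>a\<^sub>m\<close> of degree \<open>\<le> |B|\<close>, which is identified by its values at the \<open>2|B|\<close> points \<open>b\<^sub>k\<^sup>\<plusminus>\<^sup>1\<close>.\<close>

text \<open>The value at \<open>w = b\<^sub>k\<close>: only inversion sets avoiding \<open>k\<close> contribute, and for them the
  kernel reduces to the kernel without \<open>b\<^sub>k\<close>.\<close>

lemma kernel_C_value: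
  assumes fB: "finite B" and k: "k \<in> B" and gb: "generic_C B b"
    and IH: "(\<Sum>T\<in>Pow (B - {k}). kernel A (B - {k}) a (flip_on T b)) = 1"
  shows "(\<Sum>T\<in>Pow B. kernel A B a (flip_on T b) * (\<Prod>j\<in>B. 1 - flip_on T b j * b k))
    = (\<Prod>i\<in>A. 1 - a i * b k)"
proof -
  have "b k \<noteq> 0" using gb k by (auto simp: generic_C_def generic_D_def)
  then have vanish: "(\<Prod>j\<in>B. 1 - flip_on T b j * b k) = 0" if "k \<in> T" for T
    using that k fB by (subst prod_zero_iff) (auto intro!: bexI[of _ k] simp: flip_on_def)
  have "(\<Sum>T\<in>Pow B. kernel A B a (flip_on T b) * (\<Prod>j\<in>B. 1 - flip_on T b j * b k))
      = (\<Sum>T\<in>Pow (B - {k}). kernel A B a (flip_on T b) * (\<Prod>j\<in>B. 1 - flip_on T b j * b k))"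
  proof (rule sum.mono_neutral_right)
    show "\<forall>T\<in>Pow B - Pow (B - {k}). kernel A B a (flip_on T b) * (\<Prod>j\<in>B. 1 - flip_on T b j * b k) = 0"
    proof
      fix T assume "T \<in> Pow B - Pow (B - {k})"
      then have "k \<in> T" by auto
      then show "kernel A B a (flip_on T b) * (\<Prod>j\<in>B. 1 - flip_on T b j * b k) = 0"
        by (simp add: vanish)
    qed
  qed (use fB in auto)
  also have "\<dots> = (\<Sum>T\<in>Pow (B - {k}). kernel A (B - {k}) a (flip_on T b) * (\<Prod>i\<in>A. 1 - a i * b k))"
  proof (intro sum.cong refl)
    fix T assume "T \<in> Pow (B - {k})"
    then have "flip_on T b k = b k" by (auto simp: flip_on_def)
    then show "kernel A B a (flip_on T b) * (\<Prod>j\<in>B. 1 - flip_on T b j * b k)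
        = kernel A (B - {k}) a (flip_on T b) * (\<Prod>i\<in>A. 1 - a i * b k)"
      using kernel_eval_B[OF fB k generic_C_flip[OF gb], of A a T] by simp
  qed
  also have "\<dots> = (\<Prod>i\<in>A. 1 - a i * b k)"
    using IH by (simp flip: sum_distrib_right)
  finally show ?thesis .
qed

text \<open>The value at \<open>w = b\<^sub>k\<^sup>-\<^sup>1\<close>: inverting \<open>b\<^sub>k\<close> merely reindexes the sum over inversion
  sets, so this is the previous lemma for the variables with \<open>b\<^sub>k\<close> inverted.\<close>

lemma kernel_C_value_inverse:
  assumes fB: "finite B" and k: "k \<in> B" and gb: "generic_C B b"
    and IH: "(\<Sum>T\<in>Pow (B - {k}). kernel A (B - {k}) a (flip_on T b)) = 1"
  shows "(\<Sum>T\<in>Pow B. kernel A B a (flip_on T b) * (\<Prod>j\<in>B. 1 - flip_on T b j * inverse (b k)))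
    = (\<Prod>i\<in>A. 1 - a i * inverse (b k))"
proof -
  define c where "c = flip_on {k} b"
  have ck: "c k = inverse (b k)" by (simp add: c_def flip_on_def)
  have "kernel A (B - {k}) a (flip_on T c) = kernel A (B - {k}) a (flip_on T b)" for T
    by (rule kernel_cong) (auto simp: c_def flip_on_def)
  then have "(\<Sum>T\<in>Pow (B - {k}). kernel A (B - {k}) a (flip_on T c)) = 1"
    using IH by simp
  then have "(\<Sum>T\<in>Pow B. kernel A B a (flip_on T c) * (\<Prod>j\<in>B. 1 - flip_on T c j * c k))
      = (\<Prod>i\<in>A. 1 - a i * c k)"
    by (rule kernel_C_value[OF fB k generic_C_flip[OF gb, of "{k}", folded c_def]])
  moreover have "(\<Sum>T\<in>Pow B. kernel A B a (flip_on T b) * (\<Prod>j\<in>B. 1 - flip_on T b j * c k))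
      = (\<Sum>T\<in>Pow B. kernel A B a (flip_on T c) * (\<Prod>j\<in>B. 1 - flip_on T c j * c k))"
    unfolding c_def by (rule sum_flip_toggle[OF toggle_bij_Pow[OF k]])
  ultimately show ?thesis by (simp add: ck)
qed

text \<open>The polynomial identity, from the values at the \<open>2|B|\<close> points \<open>b\<^sub>k\<^sup>\<plusminus>\<^sup>1\<close>.\<close>

lemma kernel_C_interpolation:
  assumes fA: "finite A" and fB: "finite B" and "B \<noteq> {}" and cA: "card A \<le> card B"
    and gb: "generic_C B b"
    and IH: "\<And>k. k \<in> B \<Longrightarrow> (\<Sum>T\<in>Pow (B - {k}). kernel A (B - {k}) a (flip_on T b)) = 1"
  shows "(\<Sum>T\<in>Pow B. kernel A B a (flip_on T b) * (\<Prod>j\<in>B. 1 - flip_on T b j * w))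
    = (\<Prod>i\<in>A. 1 - a i * w)"
proof -
  define Q where "Q = (\<Sum>T\<in>Pow B. smult (kernel A B a (flip_on T b)) (lin_prod B (flip_on T b)))"
  have poly_Q: "poly Q w = (\<Sum>T\<in>Pow B. kernel A B a (flip_on T b) * (\<Prod>j\<in>B. 1 - flip_on T b j * w))"
    for w unfolding Q_def by (simp add: poly_sum poly_lin_prod)
  have "card B > 0" using \<open>B \<noteq> {}\<close> fB by (simp add: card_gt_0_iff)
  have "Q = lin_prod A a"
  proof (rule poly_eqI_degree)
    show "poly Q w = poly (lin_prod A a) w" if w: "w \<in> points B b" for w
    proof -
      obtain k where k: "k \<in> B" and w: "w = b k \<or> w = inverse (b k)"
        using w by (auto simp: points_def)
      then show ?thesis unfolding poly_Q poly_lin_prod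
        using kernel_C_value[OF fB k gb IH[OF k]] kernel_C_value_inverse[OF fB k gb IH[OF k]] by auto
    qed
    have "degree Q \<le> card B"
      unfolding Q_def by (rule degree_sum_smult_le) (use fB degree_lin_prod in auto)
    then show "degree Q < card (points B b)"
      using card_points_C[OF fB gb] \<open>card B > 0\<close> by linarith
    show "degree (lin_prod A a) < card (points B b)"
      using degree_lin_prod[OF fA, of a] card_points_C[OF fB gb] cA \<open>card B > 0\<close> by linarith
  qed
  then show ?thesis using poly_Q poly_lin_prod by metis
qed

lemma kernel_sum_C_step:
  assumes fA: "finite A" and fB: "finite B" and "B \<noteq> {}" and m: "m \<in> A"
    and cA: "card A \<le> card B + 1" and ha: "\<And>i j. i \<in> A \<Longrightarrow> j \<in> A \<Longrightarrow> i \<noteq> j \<Longrightarrow> a i * a j \<noteq> 1"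
    and gb: "generic_C B b"
    and IH: "\<And>k. k \<in> B \<Longrightarrow> (\<Sum>T\<in>Pow (B - {k}). kernel (A - {m}) (B - {k}) a (flip_on T b)) = 1"
  shows "(\<Sum>T\<in>Pow B. kernel A B a (flip_on T b)) = 1"
proof -
  define P where "P = (\<Prod>i\<in>A-{m}. 1 - a m * a i)"
  have P: "P \<noteq> 0" using ha m fA by (auto simp: P_def prod_zero_iff)
  have "(\<Sum>T\<in>Pow B. kernel A B a (flip_on T b)) * P
      = (\<Sum>T\<in>Pow B. kernel (A - {m}) B a (flip_on T b) * (\<Prod>j\<in>B. 1 - a m * flip_on T b j))"
    unfolding sum_distrib_right P_def using kernel_remove_A[OF fA m P[unfolded P_def]] by simp
  also have "\<dots> = (\<Sum>T\<in>Pow B. kernel (A - {m}) B a (flip_on T b) * (\<Prod>j\<in>B. 1 - flip_on T b j * a m))"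
    by (simp add: mult.commute)
  also have "\<dots> = (\<Prod>i\<in>A-{m}. 1 - a i * a m)"
    by (rule kernel_C_interpolation[OF _ fB \<open>B \<noteq> {}\<close> _ gb IH]) (use fA m cA in auto)
  also have "\<dots> = P" unfolding P_def by (simp add: mult.commute)
  finally show ?thesis using P by simp
qed

theorem kernel_sum_C:
  assumes "finite A" "finite B" "card A \<le> card B + 1"
    and "\<And>i j. i \<in> A \<Longrightarrow> j \<in> A \<Longrightarrow> i \<noteq> j \<Longrightarrow> a i * a j \<noteq> 1" and "generic_C B b"
  shows "(\<Sum>T\<in>Pow B. kernel A B a (flip_on T b)) = 1"
  using assms
proof (induction "card B" arbitrary: A B a b)
  case 0
  then have "B = {}" "card A \<le> 1" by auto
  moreover have "den_D A a = 1"
    unfolding den_D_def using pair_prod_le_one \<open>finite A\<close> \<open>card A \<le> 1\<close> by blast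
  ultimately show ?case
    by (simp add: kernel_def cross_prod_def den_C_def pair_prod_def)
next
  case (Suc n)
  have "B \<noteq> {}" using Suc.hyps(2) by auto
  have step: "(\<Sum>T\<in>Pow B. kernel A' B a' (flip_on T b)) = 1"
    if "finite A'" "m \<in> A'" "card A' \<le> card B + 1"
      "\<And>i j. i \<in> A' \<Longrightarrow> j \<in> A' \<Longrightarrow> i \<noteq> j \<Longrightarrow> a' i * a' j \<noteq> 1" for A' a' m
  proof (rule kernel_sum_C_step[OF that(1) Suc.prems(2) \<open>B \<noteq> {}\<close> that(2,3,4) Suc.prems(5)])
    fix k assume "k \<in> B"
    then show "(\<Sum>T\<in>Pow (B - {k}). kernel (A' - {m}) (B - {k}) a' (flip_on T b)) = 1"
      using Suc.hyps(1)[of "B - {k}" "A' - {m}" a' b] Suc.hyps(2) Suc.prems(2) that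
        generic_C_subset[OF Suc.prems(5), of "B - {k}"] by auto
  qed
  show ?case
  proof (cases "A = {}")
    case True
    have "kernel A B a c = kernel {0} B (\<lambda>_. 0) c" for c
      using True by (simp add: kernel_def cross_prod_def den_D_def pair_prod_def)
    then show ?thesis using step[of "{0}" 0 "\<lambda>_. 0"] by simp
  next
    case False
    then show ?thesis using step Suc.prems by blast
  qed
qed

text \<open>The proof
  for exactly \<open>|B| + 1\<close> variables is again an interpolation argument, now in one type C
  variable; here only \<open>2|A| - 2\<close> of the interpolation points are guaranteed to be distinct,
  so the case \<open>|A| = 2\<close> is computed directly.  More type D variables are then handled by
  adding type C variables equal to zero.\<close>

definition even_subsets :: "nat set \<Rightarrow> nat set set" where
  "even_subsets A = {S. S \<subseteq> A \<and> even (card S)}"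

definition odd_subsets :: "nat set \<Rightarrow> nat set set" where
  "odd_subsets A = {S. S \<subseteq> A \<and> odd (card S)}"

lemma toggle_bij_even_odd:
  "finite A \<Longrightarrow> l \<in> A \<Longrightarrow> bij_betw (toggle l) (even_subsets A) (odd_subsets A)"
  using toggle_bij_parity[of A l True] by (simp add: even_subsets_def odd_subsets_def)

lemma toggle_bij_odd_even:
  "finite A \<Longrightarrow> l \<in> A \<Longrightarrow> bij_betw (toggle l) (odd_subsets A) (even_subsets A)"
  using toggle_bij_parity[of A l False] by (simp add: even_subsets_def odd_subsets_def)

lemma card_even_subsets: "finite A \<Longrightarrow> A \<noteq> {} \<Longrightarrow> card (even_subsets A) = 2 ^ (card A - 1)"
proof -
  assume fA: "finite A" and ne: "A \<noteq> {}"
  have "card (even_subsets A) = card (odd_subsets A)"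
  proof -
    have "{} \<subset> A" using ne by blast
    then show ?thesis
      using card_subsupersets_even_odd[OF fA, of "{}"] by (simp add: even_subsets_def odd_subsets_def)
  qed
  moreover have "Pow A = even_subsets A \<union> odd_subsets A" "even_subsets A \<inter> odd_subsets A = {}"
    by (auto simp: even_subsets_def odd_subsets_def)
  ultimately have "2 ^ card A = 2 * card (even_subsets A)"
    using fA by (metis card_Pow card_Un_disjoint finite_Pow_iff finite_Un mult_2)
  moreover obtain k where "card A = Suc k" using fA ne by (metis card_0_eq not0_implies_Suc)
  ultimately show ?thesis by simp
qed

text \<open>The value at \<open>w = a\<^sub>k\<close>: only even inversion sets avoiding \<open>k\<close> contribute.\<close>

lemma kernel_D_value:
  assumes fA: "finite A" and k: "k \<in> A" and ga: "generic_D A a"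
    and IH: "(\<Sum>S\<in>even_subsets (A - {k}). kernel (A - {k}) B (flip_on S a) b) = 1"
  shows "(\<Sum>S\<in>even_subsets A. kernel A B (flip_on S a) b * (\<Prod>i\<in>A. 1 - flip_on S a i * a k))
    = (1 - a k * a k) * (\<Prod>j\<in>B. 1 - a k * b j)"
proof -
  have "a k \<noteq> 0" using ga k by (auto simp: generic_D_def)
  then have vanish: "(\<Prod>i\<in>A. 1 - flip_on S a i * a k) = 0" if "k \<in> S" for S
    using that k fA by (subst prod_zero_iff) (auto intro!: bexI[of _ k] simp: flip_on_def)
  have "(\<Sum>S\<in>even_subsets A. kernel A B (flip_on S a) b * (\<Prod>i\<in>A. 1 - flip_on S a i * a k))
      = (\<Sum>S\<in>even_subsets (A - {k}). kernel A B (flip_on S a) b * (\<Prod>i\<in>A. 1 - flip_on S a i * a k))"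
  proof (rule sum.mono_neutral_right)
    show "\<forall>S\<in>even_subsets A - even_subsets (A - {k}).
        kernel A B (flip_on S a) b * (\<Prod>i\<in>A. 1 - flip_on S a i * a k) = 0"
    proof
      fix S assume "S \<in> even_subsets A - even_subsets (A - {k})"
      then have "k \<in> S" by (auto simp: even_subsets_def)
      then show "kernel A B (flip_on S a) b * (\<Prod>i\<in>A. 1 - flip_on S a i * a k) = 0"
        by (simp add: vanish)
    qed
  qed (use fA in \<open>auto simp: even_subsets_def\<close>)
  also have "\<dots> = (\<Sum>S\<in>even_subsets (A - {k}).
      kernel (A - {k}) B (flip_on S a) b * ((1 - a k * a k) * (\<Prod>j\<in>B. 1 - a k * b j)))"
  proof (intro sum.cong refl)
    fix S assume "S \<in> even_subsets (A - {k})"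
    then have "flip_on S a k = a k" by (auto simp: flip_on_def even_subsets_def)
    then show "kernel A B (flip_on S a) b * (\<Prod>i\<in>A. 1 - flip_on S a i * a k)
        = kernel (A - {k}) B (flip_on S a) b * ((1 - a k * a k) * (\<Prod>j\<in>B. 1 - a k * b j))"
      using kernel_eval_A[OF fA k generic_D_flip[OF ga, of S]] by simp
  qed
  also have "\<dots> = (1 - a k * a k) * (\<Prod>j\<in>B. 1 - a k * b j)"
    using IH by (simp flip: sum_distrib_right)
  finally show ?thesis .
qed

text \<open>The value at \<open>w = a\<^sub>k\<^sup>-\<^sup>1\<close>: inverting \<open>a\<^sub>k\<close> and a second variable \<open>a\<^sub>l\<close> keeps the
  parity of the inversion sets, so this is the previous lemma for the variables with
  \<open>a\<^sub>k\<close> and \<open>a\<^sub>l\<close> inverted.\<close>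

lemma kernel_D_value_inverse:
  assumes fA: "finite A" and k: "k \<in> A" and l: "l \<in> A - {k}" and ga: "generic_D A a"
    and IH: "(\<Sum>S\<in>even_subsets (A - {k}). kernel (A - {k}) B (flip_on S (flip_on {l} a)) b) = 1"
  shows "(\<Sum>S\<in>even_subsets A. kernel A B (flip_on S a) b * (\<Prod>i\<in>A. 1 - flip_on S a i * inverse (a k)))
    = (1 - inverse (a k) * inverse (a k)) * (\<Prod>j\<in>B. 1 - inverse (a k) * b j)"
proof -
  define c where "c = flip_on {l} (flip_on {k} a)"
  have ck: "c k = inverse (a k)" using l by (simp add: c_def flip_on_def)
  have "kernel (A - {k}) B (flip_on S c) b = kernel (A - {k}) B (flip_on S (flip_on {l} a)) b" for S
    by (rule kernel_cong) (auto simp: c_def flip_on_def)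
  then have inverted: "(\<Sum>S\<in>even_subsets A. kernel A B (flip_on S c) b * (\<Prod>i\<in>A. 1 - flip_on S c i * c k))
      = (1 - c k * c k) * (\<Prod>j\<in>B. 1 - c k * b j)"
    using IH by (intro kernel_D_value[OF fA k]) (simp_all add: c_def generic_D_flip[OF generic_D_flip[OF ga]])
  have reindex: "(\<Sum>S\<in>even_subsets A. F (flip_on S a)) = (\<Sum>S\<in>even_subsets A. F (flip_on S c))" for F
    unfolding c_def using l sum_flip_toggle[OF toggle_bij_even_odd[OF fA k], of F a]
      sum_flip_toggle[OF toggle_bij_odd_even[OF fA], of l F "flip_on {k} a"] by simp
  have "(\<Sum>S\<in>even_subsets A. kernel A B (flip_on S a) b * (\<Prod>i\<in>A. 1 - flip_on S a i * c k))
      = (1 - c k * c k) * (\<Prod>j\<in>B. 1 - c k * b j)"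
    using reindex[of "\<lambda>c'. kernel A B c' b * (\<Prod>i\<in>A. 1 - c' i * c k)"] inverted by simp
  then show ?thesis by (simp only: ck)
qed

text \<open>The polynomial identity, from the values at the points \<open>a\<^sub>k\<^sup>\<plusminus>\<^sup>1\<close>, at least \<open>2|A| - 2\<close>
  of which are distinct.\<close>

lemma kernel_D_interpolation:
  assumes fA: "finite A" and fB: "finite B" and "B \<noteq> {}" and cA: "card A = card B + 2"
    and ga: "generic_D A a"
    and IH: "\<And>k c. k \<in> A \<Longrightarrow> generic_D (A - {k}) c \<Longrightarrow>
      (\<Sum>S\<in>even_subsets (A - {k}). kernel (A - {k}) B (flip_on S c) b) = 1"
  shows "(\<Sum>S\<in>even_subsets A. kernel A B (flip_on S a) b * (\<Prod>i\<in>A. 1 - flip_on S a i * w))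
    = (1 - w * w) * (\<Prod>j\<in>B. 1 - w * b j)"
proof -
  define Q where "Q = (\<Sum>S\<in>even_subsets A. smult (kernel A B (flip_on S a) b) (lin_prod A (flip_on S a)))"
  define R where "R = [:1, 0, -1:] * lin_prod B b"
  have poly_Q: "poly Q w = (\<Sum>S\<in>even_subsets A. kernel A B (flip_on S a) b * (\<Prod>i\<in>A. 1 - flip_on S a i * w))"
    for w unfolding Q_def by (simp add: poly_sum poly_lin_prod)
  have poly_R: "poly R w = (1 - w * w) * (\<Prod>j\<in>B. 1 - w * b j)" for w
    unfolding R_def poly_mult poly_lin_prod by (simp add: algebra_simps)
  have "card A \<ge> 3" using cA \<open>B \<noteq> {}\<close> fB by (simp add: card_gt_0_iff Suc_le_eq)
  have "Q = R"
  proof (rule poly_eqI_degree)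
    show "poly Q w = poly R w" if w: "w \<in> points A a" for w
    proof -
      obtain k where k: "k \<in> A" and w: "w = a k \<or> w = inverse (a k)"
        using w by (auto simp: points_def)
      have "card (A - {k}) \<ge> 2" using \<open>card A \<ge> 3\<close> k fA by simp
      then obtain l where l: "l \<in> A - {k}" by (metis card.empty ex_in_conv not_numeral_le_zero)
      have "generic_D (A - {k}) (flip_on {l} a)" using generic_D_subset[OF generic_D_flip[OF ga]] by blast
      then show ?thesis unfolding poly_Q poly_R
        using w kernel_D_value[OF fA k ga IH[OF k generic_D_subset[OF ga]]]
          kernel_D_value_inverse[OF fA k l ga IH[OF k]] by auto
    qed
    have "degree Q \<le> card A"
      unfolding Q_def by (rule degree_sum_smult_le) (use fA degree_lin_prod in \<open>auto simp: even_subsets_def\<close>)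
    then show "degree Q < card (points A a)"
      using card_points_D[OF fA ga] \<open>card A \<ge> 3\<close> by linarith
    have "degree R \<le> 2 + card B"
      unfolding R_def using degree_mult_le[of "[:1, 0, -1:]" "lin_prod B b"] degree_lin_prod[OF fB, of b]
      by simp
    then show "degree R < card (points A a)"
      using card_points_D[OF fA ga] \<open>card A \<ge> 3\<close> cA by linarith
  qed
  then show ?thesis using poly_Q poly_R by metis
qed

lemma two_point_identity:
  fixes P Q R :: "'a::field"
  assumes P: "P \<noteq> 0" and Q: "Q \<noteq> 0" and "P * Q \<noteq> 1" "R * R \<noteq> 1"
  shows "(1 - P * R) * (1 - Q * R) / ((1 - P * Q) * (1 - R * R))
    + (1 - inverse P * R) * (1 - inverse Q * R) / ((1 - inverse P * inverse Q) * (1 - R * R)) = 1"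
proof -
  define D where "D = (1 - P * Q) * (1 - R * R)"
  have D: "D \<noteq> 0" using assms by (auto simp: D_def)
  have inv: "1 - inverse P * R = (P - R) / P" "1 - inverse Q * R = (Q - R) / Q"
    "1 - inverse P * inverse Q = (P * Q - 1) / (P * Q)"
    using P Q by (simp_all add: field_simps)
  have "(P * Q - 1) * (1 - R * R) = - D" by (simp add: D_def algebra_simps)
  then have "(1 - inverse P * R) * (1 - inverse Q * R) / ((1 - inverse P * inverse Q) * (1 - R * R))
      = - ((P - R) * (Q - R)) / D"
    unfolding inv using P Q by (simp add: D_def)
  moreover have "(1 - P * R) * (1 - Q * R) - (P - R) * (Q - R) = D"
    by (simp add: D_def algebra_simps)
  ultimately show ?thesis using D unfolding D_def[symmetric]
    by (simp add: add_divide_distrib[symmetric] diff_divide_distrib[symmetric])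
qed

lemma kernel_sum_D_pair:
  assumes "p \<noteq> q" and ga: "generic_D {p, q} a" and "b r * b r \<noteq> 1"
  shows "(\<Sum>S\<in>even_subsets {p, q}. kernel {p, q} {r} (flip_on S a) b) = 1"
proof -
  have even: "even_subsets {p, q} = {{}, {p, q}}"
  proof -
    have "Pow {p, q} = {{}, {p}, {q}, {p, q}}" by (auto simp: Pow_insert)
    moreover have "even_subsets {p, q} = {S \<in> Pow {p, q}. even (card S)}"
      by (auto simp: even_subsets_def)
    ultimately show ?thesis using \<open>p \<noteq> q\<close> by auto
  qed
  have two: "kernel {p, q} {r} c b = (1 - c p * b r) * (1 - c q * b r) / ((1 - c p * c q) * (1 - b r * b r))"
    for c
  proof -
    have "den_D {p, q} c = pair_prod (\<lambda>i j. 1 - c i * c j) {q} * (1 - c p * c q)"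
      unfolding den_D_def using \<open>p \<noteq> q\<close>
      by (subst pair_prod_remove[of _ p]) (auto simp: mult.commute insert_Diff_if)
    then have "den_D {p, q} c = 1 - c p * c q" by (simp add: pair_prod_le_one)
    moreover have "den_C {r} b = 1 - b r * b r" by (simp add: den_C_def pair_prod_le_one)
    ultimately show ?thesis using \<open>p \<noteq> q\<close> by (simp add: kernel_def cross_prod_def)
  qed
  have "a p \<noteq> 0" "a q \<noteq> 0" "a p * a q \<noteq> 1" using ga \<open>p \<noteq> q\<close> by (auto simp: generic_D_def)
  then show ?thesis
    using two_point_identity[of "a p" "a q" "b r"] \<open>p \<noteq> q\<close> \<open>b r * b r \<noteq> 1\<close>
    by (simp add: even two flip_on_def)
qed

text \<open>The induction step: removing one type C variable \<open>b\<^sub>k\<close>, the sum is the value of the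
  polynomial identity at \<open>w = b\<^sub>k\<close>.\<close>

lemma kernel_sum_D_step:
  assumes fA: "finite A" and fB: "finite B" and k: "k \<in> B" and "B - {k} \<noteq> {}"
    and cA: "card A = card B + 1" and ga: "generic_D A a"
    and hb: "\<And>i j. i \<in> B \<Longrightarrow> j \<in> B \<Longrightarrow> b i * b j \<noteq> 1"
    and IH: "\<And>l c. l \<in> A \<Longrightarrow> generic_D (A - {l}) c \<Longrightarrow>
      (\<Sum>S\<in>even_subsets (A - {l}). kernel (A - {l}) (B - {k}) (flip_on S c) b) = 1"
  shows "(\<Sum>S\<in>even_subsets A. kernel A B (flip_on S a) b) = 1"
proof -
  define P where "P = (\<Prod>j\<in>B-{k}. 1 - b k * b j) * (1 - b k * b k)"
  have P: "P \<noteq> 0" using hb k fB by (auto simp: P_def prod_zero_iff)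
  have "(\<Sum>S\<in>even_subsets A. kernel A B (flip_on S a) b) * P
      = (\<Sum>S\<in>even_subsets A. kernel A (B - {k}) (flip_on S a) b * (\<Prod>i\<in>A. 1 - flip_on S a i * b k))"
    unfolding sum_distrib_right P_def using kernel_remove_B[OF fB k P[unfolded P_def]] by simp
  also have "\<dots> = (1 - b k * b k) * (\<Prod>j\<in>B - {k}. 1 - b k * b j)"
    by (rule kernel_D_interpolation[OF fA _ \<open>B - {k} \<noteq> {}\<close> _ ga IH])
      (use fB cA card_Suc_Diff1[OF fB k] in auto)
  also have "\<dots> = P" by (simp add: P_def)
  finally show ?thesis using P by simp
qed

lemma kernel_sum_D_exact:
  assumes "finite A" "finite B" "card A = card B + 1" "generic_D A a"
    and "\<And>i j. i \<in> B \<Longrightarrow> j \<in> B \<Longrightarrow> b i * b j \<noteq> 1"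
  shows "(\<Sum>S\<in>even_subsets A. kernel A B (flip_on S a) b) = 1"
  using assms
proof (induction "card B" arbitrary: A B a)
  case 0
  then obtain p where "A = {p}" "B = {}" by (auto simp: card_Suc_eq)
  moreover have "even_subsets {p} = {{}}" by (auto simp: even_subsets_def subset_singleton_iff)
  ultimately show ?case by (simp add: kernel_def cross_prod_def den_D_def den_C_def pair_prod_le_one)
next
  case (Suc n)
  show ?case
  proof (cases n)
    case 0
    then have "card B = 1" using Suc.hyps(2) by simp
    then obtain r where "B = {r}" by (rule card_1_singletonE)
    moreover have "card A = 2" using Suc.prems(3) \<open>card B = 1\<close> by simp
    then obtain p q where "A = {p, q}" "p \<noteq> q" by (auto simp: card_2_iff)
    ultimately show ?thesis
      using kernel_sum_D_pair[of p q a b r] Suc.prems(4) Suc.prems(5)[of r r] by simp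
  next
    case (Suc n')
    have "B \<noteq> {}" using Suc.hyps(2) by auto
    then obtain k where k: "k \<in> B" by blast
    have "card (B - {k}) = n" using Suc.hyps(2) k by simp
    then have "B - {k} \<noteq> {}" using \<open>n = Suc n'\<close> by (intro notI) simp
    show ?thesis
    proof (rule kernel_sum_D_step[OF Suc.prems(1,2) k \<open>B - {k} \<noteq> {}\<close> Suc.prems(3,4,5)])
      fix l and c :: "nat \<Rightarrow> 'a" assume "l \<in> A" "generic_D (A - {l}) c"
      then show "(\<Sum>S\<in>even_subsets (A - {l}). kernel (A - {l}) (B - {k}) (flip_on S c) b) = 1"
        using Suc.hyps(1)[of "B - {k}" "A - {l}" c] Suc.hyps(2) \<open>card (B - {k}) = n\<close> Suc.prems by auto
    qed
  qed
qed

theorem kernel_sum_D: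
  assumes fA: "finite A" and fB: "finite B" and cA: "card B + 1 \<le> card A" and ga: "generic_D A a"
    and hb: "\<And>i j. i \<in> B \<Longrightarrow> j \<in> B \<Longrightarrow> b i * b j \<noteq> 1"
  shows "(\<Sum>S\<in>even_subsets A. kernel A B (flip_on S a) b) = 1"
proof -
  obtain F where F: "finite F" "card F = card A - card B - 1" "F \<subseteq> - B"
    using infinite_arbitrarily_large[of "- B"] fB by (auto simp: Compl_eq_Diff_UNIV infinite_UNIV_nat)
  define b0 where "b0 j = (if j \<in> F then 0 else b j)" for j
  have disj: "B \<inter> F = {}" using F by auto
  have pad: "kernel A (B \<union> F) c b0 = kernel A B c b" for c
  proof -
    have "kernel A (B \<union> F) c b0 = kernel A B c b0"
      by (rule kernel_pad_zero) (use fB F disj in \<open>auto simp: b0_def\<close>)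
    also have "\<dots> = kernel A B c b" by (rule kernel_cong) (use disj in \<open>auto simp: b0_def\<close>)
    finally show ?thesis .
  qed
  have "card A = card (B \<union> F) + 1"
    using card_Un_disjoint[OF fB F(1) disj] F(2) cA by simp
  moreover have "b0 i * b0 j \<noteq> 1" if "i \<in> B \<union> F" "j \<in> B \<union> F" for i j
    using that hb disj by (auto simp: b0_def)
  ultimately have "(\<Sum>S\<in>even_subsets A. kernel A (B \<union> F) (flip_on S a) b0) = 1"
    using kernel_sum_D_exact[OF fA _ _ ga] fB F(1) by blast
  then show ?thesis using pad by simp
qed

text \<open>Proof by induction, splitting the permutations according to the preimage of the
  largest index; the resulting sum is Lagrange interpolation of the constant \<open>1\<close> at \<open>0\<close>.\<close>

lemma lagrange_basis_sum_node:
  fixes z :: "nat \<Rightarrow> 'a::field"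
  assumes fA: "finite A" and inj: "inj_on z A" and l: "l \<in> A"
  shows "(\<Sum>b\<in>A. (\<Prod>k\<in>A-{b}. inverse (z b - z k)) * (\<Prod>k\<in>A-{b}. z l - z k)) = 1"
proof -
  have "(\<Sum>b\<in>A. (\<Prod>k\<in>A-{b}. inverse (z b - z k)) * (\<Prod>k\<in>A-{b}. z l - z k))
     = (\<Prod>k\<in>A-{l}. inverse (z l - z k)) * (\<Prod>k\<in>A-{l}. z l - z k)
       + (\<Sum>b\<in>A-{l}. (\<Prod>k\<in>A-{b}. inverse (z b - z k)) * (\<Prod>k\<in>A-{b}. z l - z k))"
    using sum.remove[OF fA l] by simp
  also have "(\<Sum>b\<in>A-{l}. (\<Prod>k\<in>A-{b}. inverse (z b - z k)) * (\<Prod>k\<in>A-{b}. z l - z k)) = 0"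
    using fA l by (intro sum.neutral) (auto simp: prod_zero_iff)
  also have "(\<Prod>k\<in>A-{l}. inverse (z l - z k)) * (\<Prod>k\<in>A-{l}. z l - z k) = (\<Prod>k\<in>A-{l}. 1)"
    unfolding prod.distrib[symmetric]
  proof (intro prod.cong refl)
    fix k assume "k \<in> A - {l}"
    then have "z l - z k \<noteq> 0" using inj l by (auto simp: inj_on_def)
    then show "inverse (z l - z k) * (z l - z k) = 1" by simp
  qed
  finally show ?thesis by simp
qed

text \<open>Interpolating the constant \<open>1\<close> at the nodes and evaluating at \<open>0\<close>.\<close>

lemma lagrange_sum_one:
  fixes z :: "nat \<Rightarrow> 'a::field"
  assumes fA: "finite A" and ne: "A \<noteq> {}" and inj: "inj_on z A"
  shows "(\<Sum>b\<in>A. \<Prod>k\<in>A-{b}. z k / (z k - z b)) = 1"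
proof -
  define L where "L = (\<Sum>b\<in>A. smult (\<Prod>k\<in>A-{b}. inverse (z b - z k)) (\<Prod>k\<in>A-{b}. [:- z k, 1:]))"
  have poly_L: "poly L t = (\<Sum>b\<in>A. (\<Prod>k\<in>A-{b}. inverse (z b - z k)) * (\<Prod>k\<in>A-{b}. t - z k))" for t
    unfolding L_def by (simp add: poly_sum poly_prod)
  have node: "poly L (z l) = 1" if "l \<in> A" for l
    unfolding poly_L by (rule lagrange_basis_sum_node[OF fA inj that])
  have "L = 1"
  proof (rule poly_eqI_degree[of "z ` A"])
    show "poly L t = poly 1 t" if "t \<in> z ` A" for t using that node by auto
    have "degree L \<le> card A - 1"
      unfolding L_def
    proof (rule degree_sum_smult_le[OF fA])
      fix b assume "b \<in> A"
      have "degree (\<Prod>k\<in>A-{b}. [:- z k, 1:]) \<le> (\<Sum>k\<in>A-{b}. degree [:- z k, (1::'a):])"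
        using degree_prod_sum_le[of "A - {b}" "\<lambda>k. [:- z k, 1:]"] fA by (simp add: o_def)
      then show "degree (\<Prod>k\<in>A-{b}. [:- z k, 1:]) \<le> card A - 1"
        using \<open>b \<in> A\<close> fA by (simp add: card_Diff_singleton)
    qed
    moreover have "card A > 0" using ne fA by (simp add: card_gt_0_iff)
    ultimately show "degree L < card (z ` A)"
      using card_image[OF inj] by linarith
    show "degree (1::'a poly) < card (z ` A)"
      using card_image[OF inj] ne fA by (simp add: card_gt_0_iff)
  qed
  then have "poly L 0 = 1" by simp
  moreover have "poly L 0 = (\<Sum>b\<in>A. \<Prod>k\<in>A-{b}. z k / (z k - z b))"
  proof -
    have "inverse (z b - z k) * (0 - z k) = z k / (z k - z b)" for b k
      by (cases "z b = z k") (simp_all add: field_simps)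
    then show ?thesis unfolding poly_L prod.distrib[symmetric] by simp
  qed
  ultimately show ?thesis by simp
qed

definition gl_factor :: "nat set \<Rightarrow> (nat \<Rightarrow> 'a::field) \<Rightarrow> 'a" where
  "gl_factor A z = 1 / pair_prod (\<lambda>i j. 1 - z j / z i) A"

lemma transpose_bij_Diff:
  assumes "b \<in> A" "M \<in> A"
  shows "bij_betw (transpose M b) (A - {M}) (A - {b})"
proof (rule bij_betw_imageI)
  show "inj_on (transpose M b) (A - {M})" by (auto simp: inj_on_def dest: transpose_eq_imp_eq)
  show "transpose M b ` (A - {M}) = A - {b}"
  proof
    show "transpose M b ` (A - {M}) \<subseteq> A - {b}" using assms by (auto simp: transpose_def)
    show "A - {b} \<subseteq> transpose M b ` (A - {M})"
    proof
      fix x assume x: "x \<in> A - {b}"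
      have "x = transpose M b (transpose M b x)" by simp
      moreover have "transpose M b x \<in> A - {M}" using x assms by (auto simp: transpose_def)
      ultimately show "x \<in> transpose M b ` (A - {M})" by blast
    qed
  qed
qed

text \<open>Permutations sending the largest index \<open>M\<close> to \<open>b\<close> are \<open>(M b) \<circ> q\<close> with \<open>q\<close> fixing
  \<open>M\<close>; their GL factor splits off the factors involving \<open>b\<close>.\<close>

lemma gl_factor_transpose:
  assumes fA: "finite A" and M: "M \<in> A" and mx: "\<And>i. i \<in> A \<Longrightarrow> i \<le> M"
    and b: "b \<in> A" and q: "q permutes A - {M}"
  shows "gl_factor A (\<lambda>i. z (transpose M b (q i)))
    = gl_factor (A - {M}) (\<lambda>i. z (transpose M b (q i))) / (\<Prod>j\<in>A-{b}. 1 - z b / z j)"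
proof -
  define \<tau> where "\<tau> = transpose M b"
  have "q M = M" using permutes_not_in[OF q] by simp
  have "pair_prod (\<lambda>i j. 1 - z (\<tau> (q j)) / z (\<tau> (q i))) A
      = pair_prod (\<lambda>i j. 1 - z (\<tau> (q j)) / z (\<tau> (q i))) (A - {M}) * (\<Prod>i\<in>A-{M}. 1 - z b / z (\<tau> (q i)))"
    using pair_prod_remove_max[OF fA M mx, of "\<lambda>i j. 1 - z (\<tau> (q j)) / z (\<tau> (q i))"] \<open>q M = M\<close>
    by (simp add: \<tau>_def)
  also have "(\<Prod>i\<in>A-{M}. 1 - z b / z (\<tau> (q i))) = (\<Prod>i\<in>A-{M}. 1 - z b / z (\<tau> i))"
    using prod.permute[OF q, of "\<lambda>i. 1 - z b / z (\<tau> i)"] by (simp add: o_def)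
  also have "\<dots> = (\<Prod>j\<in>A-{b}. 1 - z b / z j)"
    using prod.reindex_bij_betw[OF transpose_bij_Diff[OF b M], of "\<lambda>j. 1 - z b / z j"]
    by (simp add: \<tau>_def)
  finally show ?thesis by (simp add: gl_factor_def \<tau>_def)
qed

text \<open>The permutations sending the largest index \<open>M\<close> to a fixed \<open>b\<close> form a coset of the
  permutations of the remaining indices; by induction their GL factors sum to the reciprocal
  of the factors involving \<open>b\<close>.\<close>

lemma gl_sum_coset:
  fixes z :: "nat \<Rightarrow> 'a::field"
  assumes fA: "finite A" and M: "M \<in> A" and mx: "\<And>i. i \<in> A \<Longrightarrow> i \<le> M" and b: "b \<in> A"
    and inj: "inj_on z A" and nz: "\<And>i. i \<in> A \<Longrightarrow> z i \<noteq> 0"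
    and IH: "\<And>w :: nat \<Rightarrow> 'a. inj_on w (A - {M}) \<Longrightarrow> (\<And>i. i \<in> A - {M} \<Longrightarrow> w i \<noteq> 0) \<Longrightarrow>
      (\<Sum>q\<in>{q. q permutes A - {M}}. gl_factor (A - {M}) (\<lambda>i. w (q i))) = 1"
  shows "(\<Sum>q\<in>{q. q permutes A - {M}}. gl_factor A (\<lambda>i. z (transpose M b (q i))))
    = 1 / (\<Prod>j\<in>A-{b}. 1 - z b / z j)"
proof -
  have bij: "bij_betw (transpose M b) (A - {M}) (A - {b})" by (rule transpose_bij_Diff[OF b M])
  have "(\<Sum>q\<in>{q. q permutes A - {M}}. gl_factor (A - {M}) (\<lambda>i. (z \<circ> transpose M b) (q i))) = 1"
  proof (rule IH)
    show "inj_on (z \<circ> transpose M b) (A - {M})"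
    proof (rule comp_inj_on)
      show "inj_on (transpose M b) (A - {M})" using bij by (rule bij_betw_imp_inj_on)
      show "inj_on z (transpose M b ` (A - {M}))"
        using inj bij_betw_imp_surj_on[OF bij] by (auto intro: inj_on_subset)
    qed
    show "(z \<circ> transpose M b) i \<noteq> 0" if "i \<in> A - {M}" for i
      using that nz bij_betw_apply[OF bij] by auto
  qed
  moreover have "(\<Sum>q\<in>{q. q permutes A - {M}}. gl_factor A (\<lambda>i. z (transpose M b (q i))))
      = (\<Sum>q\<in>{q. q permutes A - {M}}. gl_factor (A - {M}) (\<lambda>i. z (transpose M b (q i))))
        / (\<Prod>j\<in>A-{b}. 1 - z b / z j)"
    unfolding sum_divide_distrib
    by (intro sum.cong refl) (simp add: gl_factor_transpose[OF fA M mx b])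
  ultimately show ?thesis by (simp add: o_def)
qed

theorem gl_sum_one:
  fixes z :: "nat \<Rightarrow> 'a::field"
  assumes "finite A" "inj_on z A" "\<And>i. i \<in> A \<Longrightarrow> z i \<noteq> 0"
  shows "(\<Sum>\<sigma>\<in>{\<sigma>. \<sigma> permutes A}. gl_factor A (\<lambda>i. z (\<sigma> i))) = 1"
  using assms
proof (induction "card A" arbitrary: A z)
  case 0
  then show ?case by (simp add: permutes_empty gl_factor_def pair_prod_def)
next
  case (Suc n)
  define M where "M = Max A"
  have "A \<noteq> {}" using Suc.hyps(2) by auto
  then have M: "M \<in> A" and mx: "\<And>i. i \<in> A \<Longrightarrow> i \<le> M" using Suc.prems(1) by (simp_all add: M_def)
  have IH: "(\<Sum>q\<in>{q. q permutes A - {M}}. gl_factor (A - {M}) (\<lambda>i. w (q i))) = 1"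
    if "inj_on w (A - {M})" "\<And>i. i \<in> A - {M} \<Longrightarrow> w i \<noteq> 0" for w :: "nat \<Rightarrow> 'a"
  proof (rule Suc.hyps(1))
    show "n = card (A - {M})" using Suc.hyps(2) Suc.prems(1) M by simp
  qed (use Suc.prems(1) that in simp_all)
  note inner = gl_sum_coset[OF Suc.prems(1) M mx _ Suc.prems(2,3) IH]
  have "(\<Sum>\<sigma>\<in>{\<sigma>. \<sigma> permutes A}. gl_factor A (\<lambda>i. z (\<sigma> i)))
      = (\<Sum>b\<in>A. \<Sum>q\<in>{q. q permutes A - {M}}. gl_factor A (\<lambda>i. z (transpose M b (q i))))"
    using sum_over_permutations_insert[of "A - {M}" M "\<lambda>\<sigma>. gl_factor A (\<lambda>i. z (\<sigma> i))"] Suc.prems(1)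
    by (simp add: insert_absorb[OF M])
  also have "\<dots> = (\<Sum>b\<in>A. 1 / (\<Prod>j\<in>A-{b}. 1 - z b / z j))"
    by (rule sum.cong[OF refl], rule inner)
  also have "\<dots> = (\<Sum>b\<in>A. \<Prod>k\<in>A-{b}. z k / (z k - z b))"
  proof (intro sum.cong refl)
    fix b assume "b \<in> A"
    have "(\<Prod>j\<in>A-{b}. 1 - z b / z j) = (\<Prod>j\<in>A-{b}. (z j - z b) / z j)"
      using Suc.prems(3) by (intro prod.cong refl) (simp add: field_simps)
    then show "1 / (\<Prod>j\<in>A-{b}. 1 - z b / z j) = (\<Prod>k\<in>A-{b}. z k / (z k - z b))"
      by (simp add: prod_dividef)
  qed
  also have "\<dots> = 1" by (rule lagrange_sum_one[OF Suc.prems(1) \<open>A \<noteq> {}\<close> Suc.prems(2)])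
  finally show ?case .
qed

lemma uvar_diff:
  "a \<noteq> 0 \<Longrightarrow> b \<noteq> 0 \<Longrightarrow> uvar a - uvar b = a * ((1 - b / a) * (1 - inverse a * inverse b))"
  unfolding uvar_def by (simp add: field_simps)

lemma vandermonde_factor:
  assumes nz: "\<And>i. i \<in> {1..k} \<Longrightarrow> z i \<noteq> 0"
  shows "vandermonde k (\<lambda>i. uvar (z i)) = (\<Prod>i\<in>{1..k}. z i ^ (k - i))
    * pair_prod (\<lambda>i j. 1 - z j / z i) {1..k} * den_D {1..k} (\<lambda>i. inverse (z i))"
proof -
  have upper: "{i<..k} = {j\<in>{1..k}. i<j}" if "i \<in> {1..k}" for i using that by auto
  have "vandermonde k (\<lambda>i. uvar (z i)) = (\<Prod>i\<in>{1..k}.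
      z i ^ (k - i) * ((\<Prod>j\<in>{j\<in>{1..k}. i<j}. 1 - z j / z i)
        * (\<Prod>j\<in>{j\<in>{1..k}. i<j}. 1 - inverse (z i) * inverse (z j))))"
    unfolding vandermonde_def
  proof (rule prod.cong[OF refl])
    fix i assume i: "i \<in> {1..k}"
    have "card {j\<in>{1..k}. i<j} = k - i" unfolding upper[OF i, symmetric] by simp
    moreover have "(\<Prod>j\<in>{i<..k}. uvar (z i) - uvar (z j))
        = (\<Prod>j\<in>{j\<in>{1..k}. i<j}. z i * ((1 - z j / z i) * (1 - inverse (z i) * inverse (z j))))"
      unfolding upper[OF i] using nz i by (intro prod.cong refl uvar_diff) auto
    ultimately show "(\<Prod>j\<in>{i<..k}. uvar (z i) - uvar (z j)) = z i ^ (k - i) *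
        ((\<Prod>j\<in>{j\<in>{1..k}. i<j}. 1 - z j / z i) * (\<Prod>j\<in>{j\<in>{1..k}. i<j}. 1 - inverse (z i) * inverse (z j)))"
      by (simp only: prod.distrib prod_constant)
  qed
  then show ?thesis unfolding den_D_def pair_prod_def by (simp add: prod.distrib mult.assoc)
qed

text \<open>The shape of the cancellation in the next lemma: the monomial factors \<open>Xd\<close>, \<open>Yd\<close>,
  \<open>Yp\<close> of numerator and denominator cancel, whatever the remaining factors are.\<close>

lemma fraction_rearrange:
  fixes C Xd Yd Yp P1x P2x P1y P2y Q :: "'a::field"
  assumes "Xd \<noteq> 0" "Yd \<noteq> 0" "Yp \<noteq> 0"
  shows "C * Xd * (Yd * Yp) / ((Xd * P1x * P2x) * (Yd * P1y * P2y) * (Yp * Q))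
       = C / (P2x * (P2y * Q)) * (1 / P1x) * (1 / P1y)"
  using assms
  by (cases "P1x = 0"; cases "P1y = 0"; cases "P2x = 0"; cases "P2y = 0"; cases "Q = 0")
    (simp_all add: field_simps)

lemma summand_factor:
  assumes nx: "\<And>i. i \<in> {1..m} \<Longrightarrow> x i \<noteq> 0" and ny: "\<And>j. j \<in> {1..n} \<Longrightarrow> y j \<noteq> 0"
  shows "summand m n x y = kernel {1..m} {1..n} (\<lambda>i. inverse (x i)) (\<lambda>j. inverse (y j))
    * gl_factor {1..m} x * gl_factor {1..n} y"
proof -
  have powers: "(\<Prod>j\<in>{1..n}. y j ^ (n + 1 - j)) = (\<Prod>j\<in>{1..n}. y j ^ (n - j)) * (\<Prod>j\<in>{1..n}. y j)"
    unfolding prod.distrib[symmetric] by (intro prod.cong refl) (simp add: Suc_diff_le power_Suc2)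
  have squares: "(\<Prod>j\<in>{1..n}. y j - inverse (y j))
      = (\<Prod>j\<in>{1..n}. y j) * (\<Prod>j\<in>{1..n}. 1 - inverse (y j) * inverse (y j))"
    unfolding prod.distrib[symmetric] using ny by (intro prod.cong refl) (auto simp: field_simps)
  have nz: "(\<Prod>i\<in>{1..m}. x i ^ (m - i)) \<noteq> 0" "(\<Prod>j\<in>{1..n}. y j ^ (n - j)) \<noteq> 0" "(\<Prod>j\<in>{1..n}. y j) \<noteq> 0"
    using nx ny by (simp_all add: prod_zero_iff)
  have vx: "vandermonde m (\<lambda>i. uvar (x i)) = (\<Prod>i\<in>{1..m}. x i ^ (m - i))
      * pair_prod (\<lambda>i j. 1 - x j / x i) {1..m} * den_D {1..m} (\<lambda>i. inverse (x i))"
    by (rule vandermonde_factor[OF nx])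
  have vy: "vandermonde n (\<lambda>j. uvar (y j)) = (\<Prod>j\<in>{1..n}. y j ^ (n - j))
      * pair_prod (\<lambda>i j. 1 - y j / y i) {1..n} * den_D {1..n} (\<lambda>j. inverse (y j))"
    by (rule vandermonde_factor[OF ny])
  show ?thesis
    unfolding summand_def vx vy powers squares kernel_def cross_prod_def den_C_def den_D_def gl_factor_def
    by (rule fraction_rearrange[OF nz])
qed

lemma weyl_act_permutes:
  assumes "\<sigma> permutes A"
  shows "weyl_act \<sigma> S x = (\<lambda>i. flip_on (\<sigma> ` S) x (\<sigma> i))"
  using permutes_inj[OF assms] unfolding weyl_act_def flip_on_def
  by (auto simp: fun_eq_iff inj_image_mem_iff)

lemma summand_weyl:
  assumes \<sigma>: "\<sigma> permutes {1..m}" and \<tau>: "\<tau> permutes {1..n}"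
    and nx: "\<And>i. i \<in> {1..m} \<Longrightarrow> x i \<noteq> 0" and ny: "\<And>j. j \<in> {1..n} \<Longrightarrow> y j \<noteq> 0"
  shows "summand m n (weyl_act \<sigma> S x) (weyl_act \<tau> T y)
    = kernel {1..m} {1..n} (flip_on (\<sigma> ` S) (\<lambda>i. inverse (x i))) (flip_on (\<tau> ` T) (\<lambda>j. inverse (y j)))
      * gl_factor {1..m} (\<lambda>i. flip_on (\<sigma> ` S) x (\<sigma> i)) * gl_factor {1..n} (\<lambda>j. flip_on (\<tau> ` T) y (\<tau> j))"
proof -
  have inverse_flip: "(\<lambda>i. inverse (flip_on R z (\<pi> i))) = (\<lambda>i. flip_on R (\<lambda>i. inverse (z i)) (\<pi> i))"
    for R and z :: "nat \<Rightarrow> complex" and \<pi> by (auto simp: flip_on_def)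
  have "\<And>i. i \<in> {1..m} \<Longrightarrow> flip_on (\<sigma> ` S) x (\<sigma> i) \<noteq> 0"
    using nx permutes_in_image[OF \<sigma>] by (auto simp: flip_on_def)
  moreover have "\<And>j. j \<in> {1..n} \<Longrightarrow> flip_on (\<tau> ` T) y (\<tau> j) \<noteq> 0"
    using ny permutes_in_image[OF \<tau>] by (auto simp: flip_on_def)
  ultimately have "summand m n (weyl_act \<sigma> S x) (weyl_act \<tau> T y)
    = kernel {1..m} {1..n} (\<lambda>i. flip_on (\<sigma> ` S) (\<lambda>i. inverse (x i)) (\<sigma> i))
        (\<lambda>j. flip_on (\<tau> ` T) (\<lambda>j. inverse (y j)) (\<tau> j))
      * gl_factor {1..m} (\<lambda>i. flip_on (\<sigma> ` S) x (\<sigma> i)) * gl_factor {1..n} (\<lambda>j. flip_on (\<tau> ` T) y (\<tau> j))"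
    unfolding weyl_act_permutes[OF \<sigma>] weyl_act_permutes[OF \<tau>] inverse_flip[symmetric]
    by (rule summand_factor)
  then show ?thesis
    by (simp only: kernel_permute_A[OF \<sigma> finite_atLeastAtMost] kernel_permute_B[OF \<tau> finite_atLeastAtMost])
qed

text \<open>\<^bold>\<open>Summation over the Weyl group.\<close>  Permutations act bijectively on subsets of a
  given cardinality, which allows to separate the sum over the permutations.\<close>

lemma permutes_image_bij:
  assumes "\<sigma> permutes I"
  shows "bij_betw ((`) \<sigma>) {S. S \<subseteq> I \<and> P (card S)} {S. S \<subseteq> I \<and> P (card S)}"
proof (rule bij_betw_byWitness[where f' = "(`) (inv \<sigma>)"])
  have inj: "inj \<sigma>" "inj (inv \<sigma>)" using permutes_inj[OF assms] permutes_inj[OF permutes_inv[OF assms]] .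
  show "\<forall>S\<in>{S. S \<subseteq> I \<and> P (card S)}. inv \<sigma> ` \<sigma> ` S = S"
    using inj by (simp add: image_comp)
  show "\<forall>S\<in>{S. S \<subseteq> I \<and> P (card S)}. \<sigma> ` inv \<sigma> ` S = S"
    using permutes_inverses(1)[OF assms] by (simp add: image_comp)
  show "(`) \<sigma> ` {S. S \<subseteq> I \<and> P (card S)} \<subseteq> {S. S \<subseteq> I \<and> P (card S)}"
    "(`) (inv \<sigma>) ` {S. S \<subseteq> I \<and> P (card S)} \<subseteq> {S. S \<subseteq> I \<and> P (card S)}"
    using inj permutes_in_image[OF assms] permutes_in_image[OF permutes_inv[OF assms]]
    by (auto simp: card_image inj_on_subset)
qed

lemma sum_weyl_regroup:
  fixes F :: "'i set \<Rightarrow> 'j set \<Rightarrow> 'a::comm_semiring_1"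
  assumes S: "\<And>\<sigma>. \<sigma> \<in> P \<Longrightarrow> bij_betw ((`) \<sigma>) \<S> \<S>"
    and T: "\<And>\<tau>. \<tau> \<in> Q \<Longrightarrow> bij_betw ((`) \<tau>) \<T> \<T>"
  shows "(\<Sum>\<sigma>\<in>P. \<Sum>S\<in>\<S>. \<Sum>\<tau>\<in>Q. \<Sum>T\<in>\<T>. F (\<sigma> ` S) (\<tau> ` T) * G \<sigma> (\<sigma> ` S) * H \<tau> (\<tau> ` T))
    = (\<Sum>R\<in>\<S>. \<Sum>U\<in>\<T>. F R U * (\<Sum>\<sigma>\<in>P. G \<sigma> R) * (\<Sum>\<tau>\<in>Q. H \<tau> U))"
proof -
  have "(\<Sum>\<sigma>\<in>P. \<Sum>S\<in>\<S>. \<Sum>\<tau>\<in>Q. \<Sum>T\<in>\<T>. F (\<sigma> ` S) (\<tau> ` T) * G \<sigma> (\<sigma> ` S) * H \<tau> (\<tau> ` T))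
      = (\<Sum>\<sigma>\<in>P. \<Sum>R\<in>\<S>. \<Sum>\<tau>\<in>Q. \<Sum>U\<in>\<T>. F R U * G \<sigma> R * H \<tau> U)"
  proof (rule sum.cong[OF refl])
    fix \<sigma> assume "\<sigma> \<in> P"
    have "(\<Sum>S\<in>\<S>. \<Sum>\<tau>\<in>Q. \<Sum>T\<in>\<T>. F (\<sigma> ` S) (\<tau> ` T) * G \<sigma> (\<sigma> ` S) * H \<tau> (\<tau> ` T))
        = (\<Sum>S\<in>\<S>. \<Sum>\<tau>\<in>Q. \<Sum>U\<in>\<T>. F (\<sigma> ` S) U * G \<sigma> (\<sigma> ` S) * H \<tau> U)"
      by (rule sum.cong[OF refl], rule sum.cong[OF refl], rule sum.reindex_bij_betw[OF T])
    also have "\<dots> = (\<Sum>R\<in>\<S>. \<Sum>\<tau>\<in>Q. \<Sum>U\<in>\<T>. F R U * G \<sigma> R * H \<tau> U)"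
      by (rule sum.reindex_bij_betw[OF S[OF \<open>\<sigma> \<in> P\<close>]])
    finally show "(\<Sum>S\<in>\<S>. \<Sum>\<tau>\<in>Q. \<Sum>T\<in>\<T>. F (\<sigma> ` S) (\<tau> ` T) * G \<sigma> (\<sigma> ` S) * H \<tau> (\<tau> ` T))
        = (\<Sum>R\<in>\<S>. \<Sum>\<tau>\<in>Q. \<Sum>U\<in>\<T>. F R U * G \<sigma> R * H \<tau> U)" .
  qed
  also have "\<dots> = (\<Sum>R\<in>\<S>. \<Sum>\<sigma>\<in>P. \<Sum>U\<in>\<T>. \<Sum>\<tau>\<in>Q. F R U * G \<sigma> R * H \<tau> U)"
    by (subst sum.swap) (rule sum.cong[OF refl], rule sum.cong[OF refl], rule sum.swap)
  also have "\<dots> = (\<Sum>R\<in>\<S>. \<Sum>U\<in>\<T>. \<Sum>\<sigma>\<in>P. \<Sum>\<tau>\<in>Q. F R U * G \<sigma> R * H \<tau> U)"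
    by (rule sum.cong[OF refl], rule sum.swap)
  also have "\<dots> = (\<Sum>R\<in>\<S>. \<Sum>U\<in>\<T>. F R U * (\<Sum>\<sigma>\<in>P. G \<sigma> R) * (\<Sum>\<tau>\<in>Q. H \<tau> U))"
    by (simp add: sum_distrib_left sum_distrib_right mult_ac)
  finally show ?thesis .
qed

lemma uvar_inverse: "uvar (inverse z) = uvar z"
  by (simp add: uvar_def add.commute)

lemma generic_D_of_uvar:
  assumes "\<And>i. i \<in> A \<Longrightarrow> z i \<noteq> 0"
    and "\<And>i j. i \<in> A \<Longrightarrow> j \<in> A \<Longrightarrow> i \<noteq> j \<Longrightarrow> uvar (z i) \<noteq> uvar (z j)"
  shows "generic_D A z"
  unfolding generic_D_def
proof (intro conjI ballI impI)
  fix i j assume ij: "i \<in> A" "j \<in> A" "i \<noteq> j"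
  show "z i \<noteq> z j" using assms(2)[OF ij] by auto
  show "z i * z j \<noteq> 1"
  proof
    assume "z i * z j = 1"
    then have "z j = inverse (z i)" by (simp add: inverse_unique)
    then show False using assms(2)[OF ij] by (simp add: uvar_inverse)
  qed
qed (use assms(1) in auto)

lemma generic_C_of_uvar:
  assumes "generic_D B z" "\<And>j. j \<in> B \<Longrightarrow> z j - inverse (z j) \<noteq> 0"
  shows "generic_C B z"
  unfolding generic_C_def
proof (intro conjI ballI assms(1))
  fix j assume "j \<in> B"
  show "z j * z j \<noteq> 1"
  proof
    assume "z j * z j = 1"
    then have "z j = inverse (z j)" by (simp add: inverse_unique)
    then show False using assms(2)[OF \<open>j \<in> B\<close>] by simp
  qed
qed

lemma inverse_eq_flip_on: "(\<lambda>i. inverse (z i)) = flip_on UNIV z"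
  by (simp add: flip_on_def)

lemma generic_D_inj_on: "generic_D A z \<Longrightarrow> inj_on z A"
  unfolding generic_D_def inj_on_def by blast

corollary gl_sum_one_flip:
  fixes z :: "nat \<Rightarrow> 'a::field"
  assumes "generic_D A z" "finite A"
  shows "(\<Sum>\<sigma>\<in>{\<sigma>. \<sigma> permutes A}. gl_factor A (\<lambda>i. flip_on R z (\<sigma> i))) = 1"
proof -
  have gR: "generic_D A (flip_on R z)" by (rule generic_D_flip[OF assms(1)])
  show ?thesis
    by (rule gl_sum_one[OF \<open>finite A\<close> generic_D_inj_on[OF gR]]) (use gR in \<open>auto simp: generic_D_def\<close>)
qed

text \<open>Whichever of
  the two kernel identities applies, the inner sum is \<open>1\<close> and the outer sum counts subsets.\<close>

theorem kernel_double_sum: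
  assumes fI: "finite I" and fJ: "finite J" and "I \<noteq> {}" and ga: "generic_D I a" and gb: "generic_C J b"
  shows "(\<Sum>R\<in>even_subsets I. \<Sum>T\<in>Pow J. kernel I J (flip_on R a) (flip_on T b))
    = 2 ^ min (card I - 1) (card J)"
proof (cases "card I \<le> card J + 1")
  case True
  have "(\<Sum>T\<in>Pow J. kernel I J (flip_on R a) (flip_on T b)) = 1" for R
    by (rule kernel_sum_C[OF fI fJ True _ gb]) (use generic_D_flip[OF ga, of R] in \<open>auto simp: generic_D_def\<close>)
  then have "(\<Sum>R\<in>even_subsets I. \<Sum>T\<in>Pow J. kernel I J (flip_on R a) (flip_on T b)) = of_nat (card (even_subsets I))"
    by simp
  then show ?thesis using True card_even_subsets[OF fI \<open>I \<noteq> {}\<close>] by (simp add: min_def)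
next
  case False
  have "(\<Sum>R\<in>even_subsets I. kernel I J (flip_on R a) (flip_on T b)) = 1" for T
    by (rule kernel_sum_D[OF fI fJ _ ga]) (use False generic_C_products[OF generic_C_flip[OF gb]] in auto)
  then have "(\<Sum>R\<in>even_subsets I. \<Sum>T\<in>Pow J. kernel I J (flip_on R a) (flip_on T b)) = of_nat (card (Pow J))"
    by (subst sum.swap) simp
  then show ?thesis using False fJ by (simp add: card_Pow min_def)
qed

text \<open>After factorising the summands, the permutations only act on the GL factors and
  disappear; what remains is the double sum of the kernel over the inversion sets.\<close>

lemma weyl_sum_reduction:
  fixes x y :: "nat \<Rightarrow> complex"
  assumes nx: "\<And>i. i \<in> {1..m} \<Longrightarrow> x i \<noteq> 0" and ny: "\<And>j. j \<in> {1..n} \<Longrightarrow> y j \<noteq> 0"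
    and gx: "generic_D {1..m} x" and gy: "generic_D {1..n} y"
  shows "(\<Sum>\<sigma>\<in>{\<sigma>. \<sigma> permutes {1..m}}. \<Sum>S\<in>{S. S \<subseteq> {1..m} \<and> even (card S)}.
            \<Sum>\<tau>\<in>{\<tau>. \<tau> permutes {1..n}}. \<Sum>T\<in>{T. T \<subseteq> {1..n}}.
              summand m n (weyl_act \<sigma> S x) (weyl_act \<tau> T y))
    = (\<Sum>R\<in>even_subsets {1..m}. \<Sum>U\<in>Pow {1..n}.
        kernel {1..m} {1..n} (flip_on R (\<lambda>i. inverse (x i))) (flip_on U (\<lambda>j. inverse (y j))))"
    (is "?lhs = _")
proof -
  define K where "K R U = kernel {1..m} {1..n} (flip_on R (\<lambda>i. inverse (x i))) (flip_on U (\<lambda>j. inverse (y j)))"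
    for R U
  define g where "g \<sigma> R = gl_factor {1..m} (\<lambda>i. flip_on R x (\<sigma> i))" for \<sigma> R
  define h where "h \<tau> U = gl_factor {1..n} (\<lambda>j. flip_on U y (\<tau> j))" for \<tau> U
  have "?lhs = (\<Sum>\<sigma>\<in>{\<sigma>. \<sigma> permutes {1..m}}. \<Sum>S\<in>{S. S \<subseteq> {1..m} \<and> even (card S)}.
            \<Sum>\<tau>\<in>{\<tau>. \<tau> permutes {1..n}}. \<Sum>T\<in>{T. T \<subseteq> {1..n}}.
              K (\<sigma> ` S) (\<tau> ` T) * g \<sigma> (\<sigma> ` S) * h \<tau> (\<tau> ` T))"
    unfolding K_def g_def h_def by (intro sum.cong refl summand_weyl nx ny) simp_all
  also have "\<dots> = (\<Sum>R\<in>{S. S \<subseteq> {1..m} \<and> even (card S)}. \<Sum>U\<in>{T. T \<subseteq> {1..n}}.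
      K R U * (\<Sum>\<sigma>\<in>{\<sigma>. \<sigma> permutes {1..m}}. g \<sigma> R) * (\<Sum>\<tau>\<in>{\<tau>. \<tau> permutes {1..n}}. h \<tau> U))"
    by (rule sum_weyl_regroup) (use permutes_image_bij[of _ "{1..n}" "\<lambda>_. True"] permutes_image_bij in auto)
  also have "\<dots> = (\<Sum>R\<in>even_subsets {1..m}. \<Sum>U\<in>Pow {1..n}. K R U)"
    using gl_sum_one_flip[OF gx] gl_sum_one_flip[OF gy]
    by (simp add: g_def h_def even_subsets_def Pow_def)
  finally show ?thesis unfolding K_def .
qed

theorem proposition7p1:
  fixes m n :: nat and x y :: "nat \<Rightarrow> complex"
  assumes "m \<ge> 1"
    and "\<And>i. i \<in> {1..m} \<Longrightarrow> x i \<noteq> 0"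
    and "\<And>j. j \<in> {1..n} \<Longrightarrow> y j \<noteq> 0"
    and "\<And>i j. i \<in> {1..m} \<Longrightarrow> j \<in> {1..m} \<Longrightarrow> i \<noteq> j \<Longrightarrow> uvar (x i) \<noteq> uvar (x j)"
    and "\<And>i j. i \<in> {1..n} \<Longrightarrow> j \<in> {1..n} \<Longrightarrow> i \<noteq> j \<Longrightarrow> uvar (y i) \<noteq> uvar (y j)"
    and "\<And>j. j \<in> {1..n} \<Longrightarrow> y j - inverse (y j) \<noteq> 0"
  shows "(\<Sum>\<sigma>\<in>{\<sigma>. \<sigma> permutes {1..m}}. \<Sum>S\<in>{S. S \<subseteq> {1..m} \<and> even (card S)}.
            \<Sum>\<tau>\<in>{\<tau>. \<tau> permutes {1..n}}. \<Sum>T\<in>{T. T \<subseteq> {1..n}}.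
              summand m n (weyl_act \<sigma> S x) (weyl_act \<tau> T y))
         = 2 ^ min (m - 1) n"
proof -
  have gx: "generic_D {1..m} x" by (rule generic_D_of_uvar[OF assms(2,4)])
  have gy: "generic_C {1..n} y" by (rule generic_C_of_uvar[OF generic_D_of_uvar[OF assms(3,5)] assms(6)])
  have "(\<Sum>R\<in>even_subsets {1..m}. \<Sum>U\<in>Pow {1..n}.
      kernel {1..m} {1..n} (flip_on R (\<lambda>i. inverse (x i))) (flip_on U (\<lambda>j. inverse (y j))))
      = 2 ^ min (card {1..m} - 1) (card {1..n})"
    unfolding inverse_eq_flip_on
    by (rule kernel_double_sum) (use \<open>m \<ge> 1\<close> generic_D_flip[OF gx] generic_C_flip[OF gy] in auto)
  then show ?thesis
    using weyl_sum_reduction[OF assms(2,3) gx gy[unfolded generic_C_def, THEN conjunct1]] by simp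
qed

end
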